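(* Let $m$ be a positive integer and for $n\ge0$ let \[ G_n^{(m)}(q)=\sum_{0\leq k_m\leq\dots\leq k_1\leq n}q^{-2k_m}q^{\sum_{j=1}^m(k_j^2+2k_j)} \frac{(q)_n^2}{(q)_{k_m}^2(q)_{n-k_1}\prod_{j=1}^{m-1}(q)_{k_j-k_{j+1}}} \cdot\frac{(1-q^{n+1})(1-q^{n+2})}{(1-q^{n-k_m+1})(1-q^{n-k_m+2})}\in\mathbb{Z}[[q]]. \] Then for every $n\ge 0$, \[ G_n^{(m)}(q)\equiv(q)_{\infty}\sum_{0\leq k_m\leq\dots\leq k_2\leq k_1}\frac{q^{-2k_m}q^{\sum_{j=1}^m(k_j^2+2k_j)}}{(q)_{k_m}^2(q)_{k_1-k_2}\cdots(q)_{k_{m-1}-k_m}}\pmod{q^{n+1}\mathbb{Z}[[q]]}. \]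
   Context: $(q)_k=\prod_{l=1}^{k}(1-q^l)$ for $k\ge0$, $(q)_0=1$, $(q)_\infty=\prod_{l\ge1}(1-q^l)$; rational functions are expanded as power series in $q$; empty products equal $1$. *)

theory Defs
  imports "HOL-Computational_Algebra.Formal_Power_Series"
begin

definition qpoch :: "nat \<Rightarrow> rat fps" where
  "qpoch k = (\<Prod>l = 1..k. (1 - fps_X ^ l))"

text \<open>(q)_infinity as the limit of (q)_N in the q-adic (fps metric) topology.\<close>
definition qpoch_inf :: "rat fps" where
  "qpoch_inf = lim qpoch"

text \<open>Chains k_m \<le> ... \<le> k_1 \<le> N, encoded as functions nat \<Rightarrow> nat supported on {1..m}.\<close>
definition chains :: "nat \<Rightarrow> nat \<Rightarrow> (nat \<Rightarrow> nat) set" where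
  "chains m N = {k. (\<forall>j. (j < 1 \<or> m < j) \<longrightarrow> k j = 0)
                    \<and> (\<forall>j\<in>{1..<m}. k (Suc j) \<le> k j) \<and> k 1 \<le> N}"

text \<open>Exponent -2 k_m + sum_{j=1}^m (k_j^2 + 2 k_j), which is a natural number.\<close>
definition qexp :: "nat \<Rightarrow> (nat \<Rightarrow> nat) \<Rightarrow> nat" where
  "qexp m k = (\<Sum>j = 1..m. k j ^ 2 + 2 * k j) - 2 * k m"

definition Gterm :: "nat \<Rightarrow> nat \<Rightarrow> (nat \<Rightarrow> nat) \<Rightarrow> rat fps" where
  "Gterm m n k =
     fps_X ^ qexp m k * qpoch n ^ 2
     * inverse (qpoch (k m) ^ 2 * qpoch (n - k 1) * (\<Prod>j = 1..<m. qpoch (k j - k (Suc j))))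
     * ((1 - fps_X ^ (n + 1)) * (1 - fps_X ^ (n + 2)))
     * inverse ((1 - fps_X ^ (n - k m + 1)) * (1 - fps_X ^ (n - k m + 2)))"

definition G :: "nat \<Rightarrow> nat \<Rightarrow> rat fps" where
  "G m n = (\<Sum>k \<in> chains m n. Gterm m n k)"

definition Sterm :: "nat \<Rightarrow> (nat \<Rightarrow> nat) \<Rightarrow> rat fps" where
  "Sterm m k =
     fps_X ^ qexp m k
     * inverse (qpoch (k m) ^ 2 * (\<Prod>j = 1..<m. qpoch (k j - k (Suc j))))"

text \<open>The infinite sum over all chains, as the limit of the partial sums over k_1 \<le> N.\<close>
definition S :: "nat \<Rightarrow> rat fps" where
  "S m = lim (\<lambda>N. \<Sum>k \<in> chains m N. Sterm m k)"

end

theory Submission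
  imports Defs
begin

text \<open>
  The congruence holds summand by summand. For every chain, qexp m k \<ge> k_1 and qexp m k \<ge> k_m,
  so modulo q^(n+1) only the coefficients of order at most r = n - qexp m k of the remaining factor
  of a summand of G matter. Up to that order (q)_n and (q)_(n-k_1) agree with (q)_inf, and the four
  factors 1 - q^j have j > r and hence equal 1; so the summand agrees with (q)_inf times the
  corresponding summand of S. Conversely the summands of S with k_1 > n vanish modulo q^(n+1), so S
  may be replaced by its partial sum over the chains with k_1 \<le> n.
\<close>

unbundle fps_syntax

definition fps_eq_upto :: "nat \<Rightarrow> 'a fps \<Rightarrow> 'a fps \<Rightarrow> bool" where
  "fps_eq_upto n a b \<longleftrightarrow> (\<forall>i\<le>n. a $ i = b $ i)"

lemma fps_eq_upto_refl [simp]: "fps_eq_upto n a a"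
  by (simp add: fps_eq_upto_def)

lemma fps_eq_upto_sym: "fps_eq_upto n a b \<Longrightarrow> fps_eq_upto n b a"
  by (simp add: fps_eq_upto_def)

lemma fps_eq_upto_trans: "fps_eq_upto n a b \<Longrightarrow> fps_eq_upto n b c \<Longrightarrow> fps_eq_upto n a c"
  by (simp add: fps_eq_upto_def)

lemma fps_eq_upto_add:
  fixes a b c d :: "'a::monoid_add fps"
  shows "fps_eq_upto n a b \<Longrightarrow> fps_eq_upto n c d \<Longrightarrow> fps_eq_upto n (a + c) (b + d)"
  by (simp add: fps_eq_upto_def)

lemma fps_eq_upto_sum:
  fixes f g :: "'b \<Rightarrow> 'a::comm_monoid_add fps"
  shows "(\<And>x. x \<in> A \<Longrightarrow> fps_eq_upto n (f x) (g x)) \<Longrightarrow> fps_eq_upto n (sum f A) (sum g A)"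
  by (induction A rule: infinite_finite_induct) (auto intro: fps_eq_upto_add)

lemma fps_eq_upto_mult:
  fixes a b c d :: "'a::semiring_0 fps"
  shows "fps_eq_upto n a b \<Longrightarrow> fps_eq_upto n c d \<Longrightarrow> fps_eq_upto n (a * c) (b * d)"
  unfolding fps_eq_upto_def fps_mult_nth by (intro allI impI sum.cong) auto

lemma fps_eq_upto_inverse:
  fixes a b :: "'a::division_ring fps"
  assumes ab: "fps_eq_upto n a b" and a0: "a $ 0 \<noteq> 0"
  shows "fps_eq_upto n (inverse a) (inverse b)"
proof -
  have b0: "b $ 0 \<noteq> 0" using ab a0 by (simp add: fps_eq_upto_def)
  have "inverse a = inverse a * b * inverse b"
    using b0 by (simp add: mult.assoc inverse_mult_eq_1')
  moreover have "fps_eq_upto n (inverse a * b * inverse b) (inverse a * a * inverse b)"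
    by (intro fps_eq_upto_mult ab[THEN fps_eq_upto_sym] fps_eq_upto_refl)
  moreover have "inverse a * a * inverse b = inverse b"
    using a0 by (simp add: inverse_mult_eq_1)
  ultimately show ?thesis by metis
qed

lemma fps_eq_upto_X_power_mult:
  fixes a b :: "'a::comm_ring_1 fps"
  assumes "e \<le> n \<Longrightarrow> fps_eq_upto (n - e) a b"
  shows "fps_eq_upto n (fps_X ^ e * a) (fps_X ^ e * b)"
  using assms unfolding fps_eq_upto_def fps_X_power_mult_nth by auto

lemma fps_eq_upto_X_power_mult_0:
  fixes a :: "'a::comm_ring_1 fps"
  shows "n < e \<Longrightarrow> fps_eq_upto n (fps_X ^ e * a) 0"
  unfolding fps_eq_upto_def fps_X_power_mult_nth by auto

lemma fps_eq_upto_one_minus_X_power: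
  "n < j \<Longrightarrow> fps_eq_upto n (1 - fps_X ^ j :: 'a::comm_ring_1 fps) 1"
  unfolding fps_eq_upto_def by (auto simp: fps_X_power_nth)

lemma fps_eq_upto_prod_one_minus_X_power:
  assumes "finite A" "\<forall>j\<in>A. n < j"
  shows "fps_eq_upto n (\<Prod>j\<in>A. 1 - fps_X ^ j :: 'a::comm_ring_1 fps) 1"
  using assms
proof (induction A rule: finite_induct)
  case (insert x A)
  then have "fps_eq_upto n ((1 - fps_X ^ x) * (\<Prod>j\<in>A. 1 - fps_X ^ j :: 'a fps)) (1 * 1)"
    by (intro fps_eq_upto_mult fps_eq_upto_one_minus_X_power) auto
  with insert show ?case by simp
qed simp

lemma fps_eq_upto_lim:
  fixes f :: "nat \<Rightarrow> 'a::group_add fps"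
  assumes stable: "\<And>i N. i \<le> N \<Longrightarrow> fps_eq_upto i (f N) (f i)"
    and "i \<le> N"
  shows "fps_eq_upto i (lim f) (f N)"
proof -
  define L where "L = Abs_fps (\<lambda>j. f j $ j)"
  have "f \<longlonglongrightarrow> L"
  proof (rule tendsto_fpsI)
    fix j
    show "eventually (\<lambda>N. f N $ j = L $ j) sequentially"
      using eventually_ge_at_top[of j]
      by eventually_elim (use stable in \<open>auto simp: L_def fps_eq_upto_def\<close>)
  qed
  then have "lim f = L" by (rule limI)
  with stable \<open>i \<le> N\<close> show ?thesis
    by (auto simp: fps_eq_upto_def L_def)
qed

lemma qpoch_nth_0 [simp]: "qpoch k $ 0 = 1"
  unfolding qpoch_def by (induction k) (auto simp: fps_X_power_nth)

lemma fps_eq_upto_qpoch: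
  assumes "i \<le> N"
  shows "fps_eq_upto i (qpoch N) (qpoch i)"
proof -
  from assms have "{1..N} = {1..i} \<union> {i+1..N}" by auto
  then have "qpoch N = qpoch i * (\<Prod>l = i+1..N. 1 - fps_X ^ l)"
    unfolding qpoch_def by (subst prod.union_disjoint[symmetric]) auto
  moreover have "fps_eq_upto i (qpoch i * (\<Prod>l = i+1..N. 1 - fps_X ^ l)) (qpoch i * 1)"
    by (intro fps_eq_upto_mult fps_eq_upto_refl fps_eq_upto_prod_one_minus_X_power) auto
  ultimately show ?thesis by simp
qed

lemma fps_eq_upto_qpoch_qpoch_inf: "i \<le> N \<Longrightarrow> fps_eq_upto i (qpoch N) qpoch_inf"
  unfolding qpoch_inf_def
  by (rule fps_eq_upto_sym, rule fps_eq_upto_lim) (auto intro: fps_eq_upto_qpoch)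

lemma qpoch_inf_nth_0 [simp]: "qpoch_inf $ 0 = 1"
  using fps_eq_upto_qpoch_qpoch_inf[of 0 0] by (simp add: fps_eq_upto_def)

lemma fps_prod_nth_0: "finite A \<Longrightarrow> (\<Prod>j\<in>A. f j) $ 0 = (\<Prod>j\<in>A. f j $ 0 :: 'a::comm_ring_1)"
  by (induction A rule: finite_induct) auto

lemma chains_le_first:
  assumes "k \<in> Defs.chains m N" "1 \<le> j" "j \<le> m"
  shows "k j \<le> k 1"
  using assms(2,3)
proof (induction j rule: dec_induct)
  case (step j)
  with assms(1) have "k (Suc j) \<le> k j" by (auto simp: chains_def)
  with step show ?case by simp
qed simp

lemma finite_chains: "finite (Defs.chains m N)"
proof (rule finite_subset)
  let ?F = "{f. \<forall>x. (x \<in> {1..m} \<longrightarrow> f x \<in> {..N}) \<and> (x \<notin> {1..m} \<longrightarrow> f x = (0::nat))}"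
  show "Defs.chains m N \<subseteq> ?F"
  proof
    fix k assume k: "k \<in> Defs.chains m N"
    have "k x \<in> {..N}" if "x \<in> {1..m}" for x
      using chains_le_first[OF k, of x] k that by (auto simp: chains_def)
    moreover have "k x = 0" if "x \<notin> {1..m}" for x
      using k that unfolding chains_def by (cases x) auto
    ultimately show "k \<in> ?F" by blast
  qed
  show "finite ?F" by (rule finite_set_of_finite_funs) auto
qed

lemma chains_mono: "N \<le> N' \<Longrightarrow> Defs.chains m N \<subseteq> Defs.chains m N'"
  by (auto simp: chains_def)

lemma qexp_ge:
  assumes "m \<ge> 1"
  shows "k 1 \<le> qexp m k" "k m \<le> qexp m k"
proof -
  define f where "f j = k j ^ 2 + 2 * k j" for j
  have "k 1 ^ 2 \<le> qexp m k \<and> k m ^ 2 \<le> qexp m k"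
  proof (cases "m = 1")
    case False
    have "(\<Sum>j\<in>{1,m}. f j) \<le> (\<Sum>j=1..m. f j)"
      by (rule sum_mono2) (use assms in auto)
    with False show ?thesis unfolding qexp_def f_def by (simp; linarith)
  qed (simp add: qexp_def)
  moreover have "k 1 \<le> k 1 ^ 2" "k m \<le> k m ^ 2"
    by (simp_all add: power2_eq_square le_square)
  ultimately show "k 1 \<le> qexp m k" "k m \<le> qexp m k" by linarith+
qed

lemma fps_eq_upto_Gterm_Sterm:
  assumes m: "m \<ge> 1" and "k 1 \<le> n"
  shows "fps_eq_upto n (Gterm m n k) (qpoch_inf * Sterm m k)"
proof -
  define e where "e = qexp m k"
  define A where "A = qpoch (k m) ^ 2 * (\<Prod>j = 1..<m. qpoch (k j - k (Suc j)))"
  define C where "C = (1 - fps_X ^ (n + 1)) * (1 - fps_X ^ (n + 2) :: rat fps)"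
  define D where "D = (1 - fps_X ^ (n - k m + 1)) * (1 - fps_X ^ (n - k m + 2) :: rat fps)"
  define P where "P = qpoch n * qpoch n * inverse (A * qpoch (n - k 1)) * C * inverse D"
  have G: "Gterm m n k = fps_X ^ e * P"
    by (simp add: Gterm_def P_def A_def C_def D_def e_def power2_eq_square mult_ac)
  have S: "qpoch_inf * Sterm m k = fps_X ^ e * (qpoch_inf * inverse A)"
    by (simp add: Sterm_def A_def e_def mult.left_commute)
  show ?thesis unfolding G S
  proof (rule fps_eq_upto_X_power_mult)
    assume "e \<le> n"
    define r where "r = n - e"
    have bounds: "k 1 \<le> e" "k m \<le> e" using qexp_ge[OF m] by (simp_all add: e_def)
    have A0: "A $ 0 = 1" by (simp add: A_def fps_prod_nth_0 fps_nth_power_0)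
    have qn: "fps_eq_upto r (qpoch n) qpoch_inf"
      by (rule fps_eq_upto_qpoch_qpoch_inf) (simp add: r_def)
    have qnk: "fps_eq_upto r (qpoch (n - k 1)) qpoch_inf"
      by (rule fps_eq_upto_qpoch_qpoch_inf) (use bounds in \<open>simp add: r_def\<close>)
    have C1: "fps_eq_upto r C (1 * 1)" unfolding C_def
      by (intro fps_eq_upto_mult fps_eq_upto_one_minus_X_power) (auto simp: r_def)
    have D1: "fps_eq_upto r D (1 * 1)" unfolding D_def
      using bounds \<open>e \<le> n\<close> by (intro fps_eq_upto_mult fps_eq_upto_one_minus_X_power) (auto simp: r_def)
    then have "D $ 0 \<noteq> 0" by (simp add: fps_eq_upto_def)
    have "fps_eq_upto r P
        (qpoch_inf * qpoch_inf * inverse (A * qpoch_inf) * (1 * 1) * inverse (1 * 1))"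
      unfolding P_def using A0 C1 D1 \<open>D $ 0 \<noteq> 0\<close>
      by (intro fps_eq_upto_mult fps_eq_upto_inverse qn qnk fps_eq_upto_refl) auto
    moreover have "qpoch_inf * inverse qpoch_inf = 1"
      by (rule inverse_mult_eq_1') simp
    then have "qpoch_inf * qpoch_inf * inverse (A * qpoch_inf) * (1 * 1) * inverse (1 * 1)
        = qpoch_inf * inverse A"
      by (simp only: fps_inverse_mult fps_inverse_one mult_1_left mult_1_right ac_simps)
    ultimately show "fps_eq_upto (n - e) P (qpoch_inf * inverse A)" by (simp only: r_def)
  qed
qed

lemma fps_eq_upto_Sterm_0:
  assumes "m \<ge> 1" "i < k 1"
  shows "fps_eq_upto i (Sterm m k) 0"
  unfolding Sterm_def
  by (rule fps_eq_upto_X_power_mult_0) (use qexp_ge(1)[OF assms(1), of k] assms(2) in linarith)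

lemma fps_eq_upto_partial_S:
  assumes m: "m \<ge> 1" and "i \<le> N"
  shows "fps_eq_upto i (\<Sum>k\<in>Defs.chains m N. Sterm m k) (\<Sum>k\<in>Defs.chains m i. Sterm m k)"
proof -
  let ?D = "Defs.chains m N - Defs.chains m i"
  have "(\<Sum>k\<in>Defs.chains m N. Sterm m k) = (\<Sum>k\<in>?D. Sterm m k) + (\<Sum>k\<in>Defs.chains m i. Sterm m k)"
    using \<open>i \<le> N\<close> by (intro sum.subset_diff chains_mono finite_chains)
  moreover have "fps_eq_upto i (\<Sum>k\<in>?D. Sterm m k) (\<Sum>k\<in>?D. 0)"
  proof (rule fps_eq_upto_sum)
    fix k assume "k \<in> ?D"
    then have "i < k 1" by (auto simp: chains_def)
    then show "fps_eq_upto i (Sterm m k) 0" by (rule fps_eq_upto_Sterm_0[OF m])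
  qed
  ultimately show ?thesis
    using fps_eq_upto_add[OF _ fps_eq_upto_refl] by fastforce
qed

theorem mainTheorem4:
  fixes m n :: nat
  assumes "m \<ge> 1"
  shows "\<forall>i \<le> n. fps_nth (G m n) i = fps_nth (qpoch_inf * S m) i"
proof -
  have "fps_eq_upto n (G m n) (\<Sum>k\<in>Defs.chains m n. qpoch_inf * Sterm m k)"
    unfolding G_def
    by (rule fps_eq_upto_sum, rule fps_eq_upto_Gterm_Sterm[OF assms]) (auto simp: chains_def)
  also have "(\<Sum>k\<in>Defs.chains m n. qpoch_inf * Sterm m k)
      = qpoch_inf * (\<Sum>k\<in>Defs.chains m n. Sterm m k)"
    by (simp add: sum_distrib_left)
  finally have G_partial: "fps_eq_upto n (G m n) (qpoch_inf * (\<Sum>k\<in>Defs.chains m n. Sterm m k))" .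
  have "fps_eq_upto n (S m) (\<Sum>k\<in>Defs.chains m n. Sterm m k)"
    unfolding S_def by (rule fps_eq_upto_lim) (use fps_eq_upto_partial_S[OF assms] in auto)
  then have "fps_eq_upto n (qpoch_inf * (\<Sum>k\<in>Defs.chains m n. Sterm m k)) (qpoch_inf * S m)"
    by (intro fps_eq_upto_mult fps_eq_upto_refl) (rule fps_eq_upto_sym)
  with G_partial have "fps_eq_upto n (G m n) (qpoch_inf * S m)"
    by (rule fps_eq_upto_trans)
  then show ?thesis by (simp add: fps_eq_upto_def)
qed

end
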